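(* In the setting of the context, assume further that $\theta^*_i\ne\theta^*_0$ for $1\le i\le d$. Then the graph $\Delta$ is connected.
   Context: Let $\mathbb F$ be a field, $d\ge1$ an integer, $V$ a vector space over $\mathbb F$ of dimension $d+1$, $\mathcal A=\mathrm{End}(V)$ with identity $I$. Let $E^*_0,\dots,E^*_d\in\mathcal A$ satisfy $E^*_iE^*_j=\delta_{i,j}E^*_i$ and $\mathrm{rank}(E^*_i)=1$ for $0\le i,j\le d$. Let $A\in\mathcal A$ satisfy $E^*_iAE^*_j=0$ if $|i-j|>1$ and $E^*_iAE^*_j\neq0$ if $|i-j|=1$. Assume $A$ is multiplicity-free, i.e. has $d+1$ mutually distinct eigenvalues $\theta_0,\dots,\theta_d$ in $\mathbb F$, and let $E_i=\prod_{j\ne i}\frac{A-\theta_jI}{\theta_i-\theta_j}$ be the primitive idempotent of $A$ for $\theta_i$. Let $\theta^*_0,\dots,\theta^*_d\in\mathbb F$ and $A^*=\sum_{i=0}^d\theta^*_iE^*_i$. Let $\Delta$ be the graph on vertex set $\{0,1,\dots,d\}$ in which $i,j$ are adjacent iff $i\ne j$ and $E_iA^*E_j\neq0$ (this relation is symmetric). *)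

theory Defs
  imports "Jordan_Normal_Form.DL_Rank" "Jordan_Normal_Form.Jordan_Normal_Form"
begin

text \<open>End(V) for dim V = n is represented by n x n matrices over the field.\<close>

definition prim_idem :: "nat \<Rightarrow> 'a::field mat \<Rightarrow> (nat \<Rightarrow> 'a) \<Rightarrow> nat \<Rightarrow> 'a mat" where
  "prim_idem d A th i =
     foldr (\<lambda>j M. ((1 / (th i - th j)) \<cdot>\<^sub>m (A - th j \<cdot>\<^sub>m 1\<^sub>m (Suc d))) * M)
       (filter (\<lambda>j. j \<noteq> i) [0..<Suc d]) (1\<^sub>m (Suc d))"

definition dual_op :: "nat \<Rightarrow> (nat \<Rightarrow> 'a::field mat) \<Rightarrow> (nat \<Rightarrow> 'a) \<Rightarrow> 'a mat" where
  "dual_op d Es ths = foldr (\<lambda>i M. ths i \<cdot>\<^sub>m Es i + M) [0..<Suc d] (0\<^sub>m (Suc d) (Suc d))"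

definition Delta_adj :: "nat \<Rightarrow> 'a::field mat \<Rightarrow> (nat \<Rightarrow> 'a) \<Rightarrow> (nat \<Rightarrow> 'a mat) \<Rightarrow> (nat \<Rightarrow> 'a)
    \<Rightarrow> nat \<Rightarrow> nat \<Rightarrow> bool" where
  "Delta_adj d A th Es ths i j \<longleftrightarrow> i \<le> d \<and> j \<le> d \<and> i \<noteq> j \<and>
     prim_idem d A th i * dual_op d Es ths * prim_idem d A th j \<noteq> 0\<^sub>m (Suc d) (Suc d)"

definition Delta_connected :: "nat \<Rightarrow> 'a::field mat \<Rightarrow> (nat \<Rightarrow> 'a) \<Rightarrow> (nat \<Rightarrow> 'a mat) \<Rightarrow> (nat \<Rightarrow> 'a)
    \<Rightarrow> bool" where
  "Delta_connected d A th Es ths \<longleftrightarrow>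
     (\<forall>i\<le>d. \<forall>j\<le>d. (i, j) \<in> {(x, y). Delta_adj d A th Es ths x y}\<^sup>*)"

end

theory Submission
  imports Defs
begin

(* Work with two bases of V: an eigenbasis W of A, in which the E_i are the coordinate
   projectors and A is diag(th), and a basis U of vectors u_k spanning the images of the
   rank-one idempotents E*_k, in which A* is diag(ths) and A is irreducible tridiagonal.
   A nonzero entry of E_a M E_b is equivalent to a nonzero (a, b) entry of M written in
   the corresponding basis (sandwich_zero_iff). If some set S of vertices had no edge
   leaving it, the span of the eigenvectors outside S would be invariant under A and A*.
   Since ths 0 is a simple eigenvalue of A*, such an invariant subspace containing a vector
   with nonzero u_0 component contains u_0, hence (A being irreducible tridiagonal on the
   u_k) everything;
   otherwise it contains an eigenvector of A with vanishing u_0 component, which must be 0.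
   This is the abstract lemma cut_crossed; the theorem follows by applying it to the two
   bases constructed in eigenbasis and idempotent_basis. *)

lemma sum_single_term:
  fixes g :: "nat \<Rightarrow> 'a::comm_monoid_add"
  assumes "a < n" and "\<And>k. k < n \<Longrightarrow> k \<noteq> a \<Longrightarrow> g k = 0"
  shows "(\<Sum>k = 0..<n. g k) = g a"
proof -
  have "(\<Sum>k = 0..<n. g k) = (\<Sum>k = 0..<n. if k = a then g k else 0)"
    by (rule sum.cong) (use assms in auto)
  then show ?thesis using assms by simp
qed

lemma mult_unit_vec_col:
  fixes W :: "'a::field mat"
  assumes "W \<in> carrier_mat n n" and "k < n"
  shows "W *\<^sub>v unit_vec n k = col W k"
proof (rule eq_vecI)
  fix i assume i: "i < dim_vec (col W k)"
  have "(W *\<^sub>v unit_vec n k) $ i = (\<Sum>l = 0..<n. W $$ (i, l) * (if l = k then 1 else 0))"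
    using assms i by (simp add: scalar_prod_def)
  also have "\<dots> = W $$ (i, k)"
    by (subst sum_single_term[of k]) (use assms in auto)
  finally show "(W *\<^sub>v unit_vec n k) $ i = col W k $ i" using assms i by simp
qed (use assms in auto)

lemma mat_diag_mult_vec:
  assumes "z \<in> carrier_vec n" and "i < n"
  shows "(mat_diag n f *\<^sub>v z) $ i = f i * (z $ i :: 'a::field)"
proof -
  have "(mat_diag n f *\<^sub>v z) $ i = (\<Sum>l = 0..<n. (if i = l then f l else 0) * z $ l)"
    using assms by (simp add: mat_diag_def scalar_prod_def)
  also have "\<dots> = f i * z $ i"
    by (subst sum_single_term[of i]) (use assms in auto)
  finally show ?thesis .
qed

lemma smult_mat_mult_vec:
  "X \<in> carrier_mat n m \<Longrightarrow> w \<in> carrier_vec m \<Longrightarrow> (c \<cdot>\<^sub>m (X :: 'a::field mat)) *\<^sub>v w = c \<cdot>\<^sub>v (X *\<^sub>v w)"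
  by (intro eq_vecI) (auto simp: scalar_prod_def sum_distrib_left algebra_simps)

lemma mult_inverse_cancel:
  fixes X Y Z :: "'a::field mat"
  assumes "X \<in> carrier_mat n n" "Y \<in> carrier_mat n n" "X * Y = 1\<^sub>m n" "Z \<in> carrier_mat n m"
  shows "X * (Y * Z) = Z"
  using assms by (simp flip: assoc_mult_mat[of X n n Y n Z m])

lemma eigen_columns:
  fixes X W :: "'a::field mat"
  assumes X: "X \<in> carrier_mat n n" and W: "W \<in> carrier_mat n n"
    and eig: "\<And>k. k < n \<Longrightarrow> X *\<^sub>v col W k = f k \<cdot>\<^sub>v col W k"
  shows "X * W = W * mat_diag n f"
proof (rule eq_matI)
  fix i k assume "i < dim_row (W * mat_diag n f)" and "k < dim_col (W * mat_diag n f)"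
  then have i: "i < n" and k: "k < n" using W by (auto simp: mat_diag_def)
  have "(X * W) $$ (i, k) = (X *\<^sub>v col W k) $ i" using X W i k by simp
  also have "\<dots> = W $$ (i, k) * f k" using eig[OF k] i k W by simp
  finally show "(X * W) $$ (i, k) = (W * mat_diag n f) $$ (i, k)"
    using i k W by (simp add: mat_diag_mult_right[OF W])
qed (use X W in \<open>auto simp: mat_diag_def\<close>)

definition inverse_pair :: "nat \<Rightarrow> 'a::semiring_1 mat \<Rightarrow> 'a mat \<Rightarrow> bool" where
  "inverse_pair n W Wi \<longleftrightarrow>
     W \<in> carrier_mat n n \<and> Wi \<in> carrier_mat n n \<and> W * Wi = 1\<^sub>m n \<and> Wi * W = 1\<^sub>m n"

definition basis_projector :: "nat \<Rightarrow> 'a::field mat \<Rightarrow> nat \<Rightarrow> 'a mat \<Rightarrow> bool" where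
  "basis_projector n W a P \<longleftrightarrow>
     P \<in> carrier_mat n n \<and> (\<forall>k<n. P *\<^sub>v col W k = (if a = k then col W k else 0\<^sub>v n))"

(* Nonzero vectors f_k separated by matrices P_a (P_a f_k = [a = k] f_k) are linearly
   independent, so they are the columns of an invertible matrix W, and P_a is the projector
   onto the a-th column of W. *)
lemma projector_basis:
  fixes f :: "nat \<Rightarrow> 'a::field vec" and P :: "nat \<Rightarrow> 'a mat"
  assumes f: "\<And>k. k < n \<Longrightarrow> f k \<in> carrier_vec n" and f_nz: "\<And>k. k < n \<Longrightarrow> f k \<noteq> 0\<^sub>v n"
    and P: "\<And>a. a < n \<Longrightarrow> P a \<in> carrier_mat n n"
    and Pf: "\<And>a k. a < n \<Longrightarrow> k < n \<Longrightarrow> P a *\<^sub>v f k = (if a = k then f k else 0\<^sub>v n)"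
  obtains W Wi where "inverse_pair n W Wi" "\<And>k. k < n \<Longrightarrow> col W k = f k"
    "\<And>a. a < n \<Longrightarrow> basis_projector n W a (P a)"
proof -
  define W where "W = mat_of_cols n (map f [0..<n])"
  have W: "W \<in> carrier_mat n n" unfolding W_def using mat_of_cols_carrier(1)[of n "map f [0..<n]"] by simp
  have colW: "col W k = f k" if "k < n" for k
    unfolding W_def using that f[OF that] by simp
  have "det W \<noteq> 0"
  proof
    assume "det W = 0"
    then obtain c where c: "c \<in> carrier_vec n" "c \<noteq> 0\<^sub>v n" "W *\<^sub>v c = 0\<^sub>v n"
      using det_0_iff_vec_prod_zero_field[OF W] by auto
    have "c $ a = 0" if a: "a < n" for a
    proof -
      have PW: "(P a * W) $$ (i, k) = (if a = k then f k $ i else 0)" if i: "i < n" and k: "k < n" for i k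
      proof -
        have "(P a * W) $$ (i, k) = (P a *\<^sub>v col W k) $ i" using i k P[OF a] W by simp
        then show ?thesis using Pf[OF a k] colW[OF k] i f[OF k] by auto
      qed
      have "(P a * W) *\<^sub>v c = P a *\<^sub>v (W *\<^sub>v c)" using P[OF a] W c by simp
      also have "\<dots> = 0\<^sub>v n" unfolding c(3) using P[OF a] by (intro eq_vecI) (auto simp: scalar_prod_def)
      finally have zero: "(P a * W) *\<^sub>v c = 0\<^sub>v n" .
      obtain i where i: "i < n" "f a $ i \<noteq> 0"
        using f_nz[OF a] f[OF a] by (metis carrier_vecD eq_vecI index_zero_vec)
      have "((P a * W) *\<^sub>v c) $ i = (\<Sum>k = 0..<n. (if a = k then f k $ i else 0) * c $ k)"
        using i P[OF a] W c(1) PW by (simp add: scalar_prod_def del: assoc_mult_mat_vec)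
      also have "\<dots> = f a $ i * c $ a"
        by (subst sum_single_term[of a]) (use a in auto)
      finally show ?thesis using zero i by simp
    qed
    then have "c = 0\<^sub>v n" using c by (intro eq_vecI) auto
    then show False using c by simp
  qed
  then obtain Wi where "Wi \<in> carrier_mat n n" "W * Wi = 1\<^sub>m n" "Wi * W = 1\<^sub>m n"
    using det_non_zero_imp_unit[OF W, of undefined] unfolding Units_def ring_mat_simps by auto
  moreover have "basis_projector n W a (P a)" if "a < n" for a
    unfolding basis_projector_def using P Pf colW that by simp
  ultimately show ?thesis using that W colW unfolding inverse_pair_def by blast
qed

(* A nonzero idempotent matrix has a nonzero fixed vector (any nonzero column). *)
lemma idempotent_fixed_vector:
  fixes X :: "'a::field mat"
  assumes X: "X \<in> carrier_mat n n" and idem: "X * X = X" and nz: "X \<noteq> 0\<^sub>m n n"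
  shows "\<exists>w. w \<in> carrier_vec n \<and> w \<noteq> 0\<^sub>v n \<and> X *\<^sub>v w = w"
proof -
  obtain k where k: "k < n" "col X k \<noteq> 0\<^sub>v n"
  proof (rule ccontr)
    assume "\<not> thesis"
    then have zero_cols: "\<And>k. k < n \<Longrightarrow> col X k = 0\<^sub>v n" using that by blast
    have "X = 0\<^sub>m n n"
    proof (rule eq_matI)
      fix i k assume "i < dim_row (0\<^sub>m n n :: 'a mat)" and "k < dim_col (0\<^sub>m n n :: 'a mat)"
      then have i: "i < n" and k: "k < n" by auto
      have "X $$ (i, k) = col X k $ i" using X i k by simp
      then show "X $$ (i, k) = 0\<^sub>m n n $$ (i, k)" using zero_cols[OF k] i k by simp
    qed (use X in auto)
    then show False using nz by simp
  qed
  have "X *\<^sub>v col X k = col (X * X) k" using col_mult2[OF X X k(1)] by simp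
  then have fixed: "X *\<^sub>v col X k = col X k" unfolding idem .
  have "col X k \<in> carrier_vec n" using X by (simp add: carrier_vecI)
  then show ?thesis using fixed k(2) by blast
qed

lemma projector_conj:
  fixes W :: "'a::field mat"
  assumes W: "inverse_pair n W Wi" and P: "basis_projector n W a P"
  shows "P = W * mat_diag n (\<lambda>k. if k = a then 1 else 0) * Wi"
proof -
  have Pc: "P \<in> carrier_mat n n" and Wc: "W \<in> carrier_mat n n" and Wic: "Wi \<in> carrier_mat n n"
    and WWi: "W * Wi = 1\<^sub>m n"
    using P W unfolding basis_projector_def inverse_pair_def by auto
  have "P * W = W * mat_diag n (\<lambda>k. if k = a then 1 else 0)"
    using P Wc unfolding basis_projector_def by (intro eigen_columns[OF Pc Wc]) (auto intro!: eq_vecI)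
  moreover have "P = (P * W) * Wi" using Pc Wc Wic WWi by simp
  ultimately show ?thesis by simp
qed

lemma sandwich_zero_iff:
  fixes W :: "'a::field mat"
  assumes W: "inverse_pair n W Wi"
    and P: "basis_projector n W a P" and a: "a < n"
    and Q: "basis_projector n W b Q" and b: "b < n"
    and M: "M \<in> carrier_mat n n"
  shows "P * M * Q = 0\<^sub>m n n \<longleftrightarrow> (Wi * M * W) $$ (a, b) = 0"
proof -
  have Wc: "W \<in> carrier_mat n n" and Wic: "Wi \<in> carrier_mat n n" and WiW: "Wi * W = 1\<^sub>m n"
    using W unfolding inverse_pair_def by auto
  define X where "X = Wi * M * W"
  define Da where "Da = mat_diag n (\<lambda>k. if k = a then 1 else (0::'a))"
  define Db where "Db = mat_diag n (\<lambda>k. if k = b then 1 else (0::'a))"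
  define Y where "Y = Da * X * Db"
  have X: "X \<in> carrier_mat n n" unfolding X_def using Wic M Wc by simp
  have Da: "Da \<in> carrier_mat n n" and Db: "Db \<in> carrier_mat n n"
    unfolding Da_def Db_def by simp_all
  have Y: "Y \<in> carrier_mat n n" unfolding Y_def using X Da Db by simp
  have Y_entry: "Y $$ (i, j) = (if i = a \<and> j = b then X $$ (a, b) else 0)" if "i < n" "j < n" for i j
    unfolding Y_def Da_def Db_def using X that
    by (simp add: mat_diag_mult_left[of _ n n] mat_diag_mult_right[of _ n n])
  have "P * M * Q = W * Da * Wi * M * (W * Db * Wi)"
    using projector_conj[OF W P] projector_conj[OF W Q] unfolding Da_def Db_def by simp
  also have "\<dots> = W * Y * Wi"
    unfolding Y_def X_def using Wc Wic M Da Db by (simp add: assoc_mult_mat[of _ n n _ n _ n])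
  finally have PMQ: "P * M * Q = W * Y * Wi" .
  have "W * Y * Wi = 0\<^sub>m n n \<longleftrightarrow> Y = 0\<^sub>m n n"
  proof
    assume "W * Y * Wi = 0\<^sub>m n n"
    then have "Wi * (W * Y * Wi) * W = 0\<^sub>m n n" using Wc Wic by simp
    moreover have "Wi * (W * Y * Wi) * W = Y"
      using Wc Wic Y WiW by (simp add: assoc_mult_mat[of _ n n _ n _ n] flip: assoc_mult_mat[of Wi n n W n])
    ultimately show "Y = 0\<^sub>m n n" by simp
  qed (use Wc Wic in simp)
  also have "\<dots> \<longleftrightarrow> X $$ (a, b) = 0"
  proof
    assume "Y = 0\<^sub>m n n"
    then show "X $$ (a, b) = 0" using Y_entry[OF a b] a b by simp
  qed (use Y Y_entry in \<open>auto intro!: eq_matI\<close>)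
  finally show ?thesis unfolding PMQ X_def .
qed

definition tridiag_irred :: "nat \<Rightarrow> 'a::zero mat \<Rightarrow> bool" where
  "tridiag_irred n T \<longleftrightarrow> (\<forall>l<n. \<forall>j<n.
     (Suc j < l \<or> Suc l < j \<longrightarrow> T $$ (l, j) = 0) \<and> (Suc j = l \<or> Suc l = j \<longrightarrow> T $$ (l, j) \<noteq> 0))"

definition lin_closed :: "nat \<Rightarrow> 'a::field vec set \<Rightarrow> bool" where
  "lin_closed n R \<longleftrightarrow> R \<subseteq> carrier_vec n \<and>
     (\<forall>c1 c2 y1 y2. y1 \<in> R \<longrightarrow> y2 \<in> R \<longrightarrow> c1 \<cdot>\<^sub>v y1 + c2 \<cdot>\<^sub>v y2 \<in> R)"

lemma lin_closedD:
  assumes "lin_closed n R"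
  shows "y \<in> R \<Longrightarrow> y \<in> carrier_vec n"
    and "y1 \<in> R \<Longrightarrow> y2 \<in> R \<Longrightarrow> c1 \<cdot>\<^sub>v y1 + c2 \<cdot>\<^sub>v y2 \<in> R"
  using assms unfolding lin_closed_def by auto

(* A subspace invariant under diag(ds), where ds 0 differs from all other ds k, contains e_0
   as soon as it contains a vector with nonzero 0-th coordinate: the polynomial
   prod_{k>0} (L - ds k) / (ds 0 - ds k) in L = diag(ds) projects onto the 0-th coordinate. *)
lemma diag_invariant_contains_unit_0:
  fixes ds :: "nat \<Rightarrow> 'a::field"
  assumes R: "lin_closed n R" and inv: "\<And>y. y \<in> R \<Longrightarrow> mat_diag n ds *\<^sub>v y \<in> R"
    and sep: "\<And>k. 0 < k \<Longrightarrow> k < n \<Longrightarrow> ds k \<noteq> ds 0"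
    and y: "y \<in> R" and y0: "y $ 0 \<noteq> 0" and n: "0 < n"
  shows "unit_vec n 0 \<in> R"
proof -
  have yc: "y \<in> carrier_vec n" using lin_closedD(1)[OF R y] .
  define z where "z js = vec n (\<lambda>k. (\<Prod>j\<leftarrow>js. (ds k - ds j) / (ds 0 - ds j)) * y $ k)" for js
  have zR: "z js \<in> R" if "set js \<subseteq> {1..<n}" for js
    using that
  proof (induction js)
    case Nil
    have "z [] = y" unfolding z_def using yc by (intro eq_vecI) auto
    then show ?case using y by simp
  next
    case (Cons j js)
    have s: "ds 0 - ds j \<noteq> 0" using sep[of j] Cons.prems by auto
    have zj: "z js \<in> R" using Cons by auto
    have zc: "z js \<in> carrier_vec n" unfolding z_def by simp
    have "z (j # js) = (1 / (ds 0 - ds j)) \<cdot>\<^sub>v (mat_diag n ds *\<^sub>v z js) + (- ds j / (ds 0 - ds j)) \<cdot>\<^sub>v z js"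
    proof (rule eq_vecI)
      fix k assume "k < dim_vec ((1 / (ds 0 - ds j)) \<cdot>\<^sub>v (mat_diag n ds *\<^sub>v z js) + (- ds j / (ds 0 - ds j)) \<cdot>\<^sub>v z js)"
      then have k: "k < n" using zc by (simp add: mat_diag_def)
      have "((1 / (ds 0 - ds j)) \<cdot>\<^sub>v (mat_diag n ds *\<^sub>v z js) + (- ds j / (ds 0 - ds j)) \<cdot>\<^sub>v z js) $ k
          = 1 / (ds 0 - ds j) * (ds k * z js $ k) + (- ds j / (ds 0 - ds j)) * z js $ k"
        using k zc mat_diag_mult_vec[OF zc k, of ds] by (simp add: mat_diag_def)
      also have "\<dots> = (ds k - ds j) / (ds 0 - ds j) * z js $ k"
        by (simp add: diff_divide_distrib algebra_simps)
      also have "\<dots> = z (j # js) $ k" using k by (simp add: z_def)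
      finally show "z (j # js) $ k = ((1 / (ds 0 - ds j)) \<cdot>\<^sub>v (mat_diag n ds *\<^sub>v z js) + (- ds j / (ds 0 - ds j)) \<cdot>\<^sub>v z js) $ k" ..
    qed (use zc in \<open>simp add: z_def mat_diag_def\<close>)
    then show ?case using lin_closedD(2)[OF R inv[OF zj] zj] by simp
  qed
  have "z [1..<n] = (y $ 0) \<cdot>\<^sub>v unit_vec n 0"
  proof (rule eq_vecI)
    fix k assume "k < dim_vec ((y $ 0) \<cdot>\<^sub>v unit_vec n 0)"
    then have k: "k < n" by simp
    have "(\<Prod>j\<leftarrow>[1..<n]. (ds k - ds j) / (ds 0 - ds j)) = (if k = 0 then 1 else 0)"
    proof (cases "k = 0")
      case True
      have "(\<Prod>j\<leftarrow>[1..<n]. (ds k - ds j) / (ds 0 - ds j)) = 1"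
      proof (rule prod_list_neutral)
        fix x assume "x \<in> set (map (\<lambda>j. (ds k - ds j) / (ds 0 - ds j)) [1..<n])"
        then obtain j where "0 < j" "j < n" "x = (ds k - ds j) / (ds 0 - ds j)"
          by (auto simp del: upt_Suc) (metis One_nat_def Suc_le_lessD)
        then show "x = 1" using sep[of j] True by simp
      qed
      then show ?thesis using True by simp
    next
      case False
      then have "0 \<in> set (map (\<lambda>j. (ds k - ds j) / (ds 0 - ds j)) [1..<n])" using k by force
      then show ?thesis using False by (simp add: prod_list_zero_iff)
    qed
    then show "z [1..<n] $ k = ((y $ 0) \<cdot>\<^sub>v unit_vec n 0) $ k" using k by (simp add: z_def)
  qed (simp add: z_def)
  moreover have "z [1..<n] \<in> R" by (rule zR) auto
  ultimately have "(y $ 0) \<cdot>\<^sub>v unit_vec n 0 \<in> R" by simp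
  moreover have "unit_vec n 0 = (1 / y $ 0) \<cdot>\<^sub>v ((y $ 0) \<cdot>\<^sub>v unit_vec n 0) + 0 \<cdot>\<^sub>v ((y $ 0) \<cdot>\<^sub>v unit_vec n 0)"
    using y0 by (intro eq_vecI) auto
  ultimately show ?thesis using lin_closedD(2)[OF R] by metis
qed

(* A subspace invariant under an irreducible tridiagonal T and containing e_0 is everything:
   T e_j is e_{j+1} up to a nonzero factor plus a combination of e_0, ..., e_j. *)
lemma tridiag_cyclic:
  fixes T :: "'a::field mat"
  assumes R: "lin_closed n R" and T: "T \<in> carrier_mat n n" and tri: "tridiag_irred n T"
    and inv: "\<And>y. y \<in> R \<Longrightarrow> T *\<^sub>v y \<in> R" and e0: "unit_vec n 0 \<in> R" and n: "0 < n"
  shows "carrier_vec n \<subseteq> R"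
proof -
  have "\<forall>y\<in>carrier_vec n. (\<forall>l<n. j < l \<longrightarrow> y $ l = 0) \<longrightarrow> y \<in> R" if "j < n" for j
    using that
  proof (induction j)
    case 0
    show ?case
    proof (intro ballI impI)
      fix y :: "'a vec" assume y: "y \<in> carrier_vec n" and supp: "\<forall>l<n. 0 < l \<longrightarrow> y $ l = 0"
      have "y = (y $ 0) \<cdot>\<^sub>v unit_vec n 0 + 0 \<cdot>\<^sub>v unit_vec n 0"
        using y supp by (intro eq_vecI) auto
      then show "y \<in> R" using lin_closedD(2)[OF R e0 e0] by metis
    qed
  next
    case (Suc j)
    have IH: "\<forall>y\<in>carrier_vec n. (\<forall>l<n. j < l \<longrightarrow> y $ l = 0) \<longrightarrow> y \<in> R" using Suc by simp
    have j: "j < n" using Suc by simp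
    define w where "w = T *\<^sub>v unit_vec n j"
    have wR: "w \<in> R" unfolding w_def using IH j by (intro inv) auto
    have wc: "w \<in> carrier_vec n" using T by (simp add: w_def)
    have w_entry: "w $ l = T $$ (l, j)" if "l < n" for l
      unfolding w_def mult_unit_vec_col[OF T j] using that j T by simp
    have sub: "T $$ (Suc j, j) \<noteq> 0" and below: "\<And>l. l < n \<Longrightarrow> Suc j < l \<Longrightarrow> T $$ (l, j) = 0"
      using tri Suc.prems j unfolding tridiag_irred_def by auto
    show ?case
    proof (intro ballI impI)
      fix y :: "'a vec" assume y: "y \<in> carrier_vec n" and supp: "\<forall>l<n. Suc j < l \<longrightarrow> y $ l = 0"
      define c where "c = y $ Suc j / T $$ (Suc j, j)"
      have "y + (- c) \<cdot>\<^sub>v w \<in> R"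
      proof -
        have "(y + (- c) \<cdot>\<^sub>v w) $ l = 0" if l: "l < n" "j < l" for l
        proof (cases "l = Suc j")
          case True
          then show ?thesis using l y wc w_entry[OF l(1)] sub by (simp add: c_def)
        next
          case False
          then show ?thesis using l y wc w_entry[OF l(1)] supp below[of l] by simp
        qed
        then show ?thesis using IH y wc by simp
      qed
      moreover have "y = 1 \<cdot>\<^sub>v (y + (- c) \<cdot>\<^sub>v w) + c \<cdot>\<^sub>v w"
        using y wc by (intro eq_vecI) auto
      ultimately show "y \<in> R" using lin_closedD(2)[OF R _ wR] by metis
    qed
  qed
  note supported = this
  show ?thesis
  proof
    fix y :: "'a vec" assume "y \<in> carrier_vec n"
    then show "y \<in> R" using supported[of "n - 1"] n by auto
  qed
qed

(* An eigenvector of an irreducible tridiagonal matrix is determined by its 0-th coordinate: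
   row j of T y = lam y expresses y_{j+1} through y_0, ..., y_j. *)
lemma tridiag_eigenvector_zero:
  fixes T :: "'a::field mat"
  assumes T: "T \<in> carrier_mat n n" and tri: "tridiag_irred n T"
    and y: "y \<in> carrier_vec n" and eig: "T *\<^sub>v y = lam \<cdot>\<^sub>v y" and y0: "y $ 0 = 0"
  shows "y = 0\<^sub>v n"
proof -
  have "\<forall>l\<le>j. y $ l = 0" if "j < n" for j
    using that
  proof (induction j)
    case 0
    then show ?case using y0 by simp
  next
    case (Suc j)
    have IH: "\<forall>l\<le>j. y $ l = 0" and j: "j < n" "Suc j < n" using Suc by auto
    have super: "T $$ (j, Suc j) \<noteq> 0" and above: "\<And>m. m < n \<Longrightarrow> Suc j < m \<Longrightarrow> T $$ (j, m) = 0"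
      using tri j unfolding tridiag_irred_def by auto
    have "(T *\<^sub>v y) $ j = (\<Sum>m = 0..<n. T $$ (j, m) * y $ m)"
      using T y j by (simp add: scalar_prod_def)
    also have "\<dots> = T $$ (j, Suc j) * y $ Suc j"
    proof (rule sum_single_term)
      fix m assume "m < n" and "m \<noteq> Suc j"
      then consider "m \<le> j" | "Suc j < m" by linarith
      then show "T $$ (j, m) * y $ m = 0" using IH above \<open>m < n\<close> by cases auto
    qed (use j in simp)
    finally have "T $$ (j, Suc j) * y $ Suc j = lam * y $ j" using eig y j by simp
    then have "y $ Suc j = 0" using IH super by simp
    then show ?case using IH le_Suc_eq by auto
  qed
  then show ?thesis using y by (intro eq_vecI) auto
qed

definition coords_vanish :: "nat \<Rightarrow> 'a::field mat \<Rightarrow> nat set \<Rightarrow> 'a vec set" where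
  "coords_vanish n M S = {y \<in> carrier_vec n. \<forall>a<n. a \<in> S \<longrightarrow> (M *\<^sub>v y) $ a = 0}"

lemma lin_closed_coords_vanish:
  fixes M :: "'a::field mat"
  assumes M: "M \<in> carrier_mat n n"
  shows "lin_closed n (coords_vanish n M S)"
  unfolding lin_closed_def
proof (intro conjI allI impI)
  fix c1 c2 y1 y2 assume y1: "y1 \<in> coords_vanish n M S" and y2: "y2 \<in> coords_vanish n M S"
  have c: "y1 \<in> carrier_vec n" "y2 \<in> carrier_vec n" using y1 y2 unfolding coords_vanish_def by auto
  have "M *\<^sub>v (c1 \<cdot>\<^sub>v y1 + c2 \<cdot>\<^sub>v y2) = c1 \<cdot>\<^sub>v (M *\<^sub>v y1) + c2 \<cdot>\<^sub>v (M *\<^sub>v y2)"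
    using c M by (simp add: mult_add_distrib_mat_vec[OF M] mult_mat_vec[OF M])
  then show "c1 \<cdot>\<^sub>v y1 + c2 \<cdot>\<^sub>v y2 \<in> coords_vanish n M S"
    using y1 y2 c M unfolding coords_vanish_def by (auto simp del: index_mult_mat_vec)
qed (auto simp: coords_vanish_def)

lemma coords_vanish_invariant:
  fixes M X C :: "'a::field mat"
  assumes M: "M \<in> carrier_mat n n" and X: "X \<in> carrier_mat n n" and C: "C \<in> carrier_mat n n"
    and MX: "M * X = C * M"
    and block: "\<And>a b. a < n \<Longrightarrow> b < n \<Longrightarrow> a \<in> S \<Longrightarrow> b \<notin> S \<Longrightarrow> C $$ (a, b) = 0"
    and y: "y \<in> coords_vanish n M S"
  shows "X *\<^sub>v y \<in> coords_vanish n M S"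
proof -
  have yc: "y \<in> carrier_vec n" using y unfolding coords_vanish_def by simp
  have "M *\<^sub>v (X *\<^sub>v y) = (M * X) *\<^sub>v y" using M X yc by simp
  also have "\<dots> = C *\<^sub>v (M *\<^sub>v y)" unfolding MX using M C yc by simp
  finally have "M *\<^sub>v (X *\<^sub>v y) = C *\<^sub>v (M *\<^sub>v y)" .
  moreover have "(C *\<^sub>v (M *\<^sub>v y)) $ a = 0" if a: "a < n" "a \<in> S" for a
  proof -
    have "(C *\<^sub>v (M *\<^sub>v y)) $ a = (\<Sum>b = 0..<n. C $$ (a, b) * (M *\<^sub>v y) $ b)"
      using a C M yc by (simp add: scalar_prod_def)
    also have "\<dots> = 0"
      using y block[OF a(1) _ a(2)] unfolding coords_vanish_def by (intro sum.neutral) auto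
    finally show ?thesis .
  qed
  ultimately show ?thesis using X yc unfolding coords_vanish_def by simp
qed

lemma change_of_basis:
  fixes W Wi U Ui X Y D L :: "'a::field mat"
  assumes W: "inverse_pair n W Wi" and U: "inverse_pair n U Ui"
    and X: "X \<in> carrier_mat n n" and D: "D \<in> carrier_mat n n" and XW: "X * W = W * D"
    and Y: "Y \<in> carrier_mat n n" and L: "L \<in> carrier_mat n n" and YU: "Y * U = U * L"
  shows "inverse_pair n (Wi * U) (Ui * W)"
    and "(Wi * U) * (Ui * X * U) = D * (Wi * U)"
    and "(Wi * U) * L = (Wi * Y * W) * (Wi * U)"
proof -
  have Wc: "W \<in> carrier_mat n n" "Wi \<in> carrier_mat n n" "W * Wi = 1\<^sub>m n" "Wi * W = 1\<^sub>m n"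
    and Uc: "U \<in> carrier_mat n n" "Ui \<in> carrier_mat n n" "U * Ui = 1\<^sub>m n" "Ui * U = 1\<^sub>m n"
    using W U unfolding inverse_pair_def by auto
  note assoc = assoc_mult_mat[of _ n n _ n _ n]
  note cancel = mult_inverse_cancel[OF Wc(1,2,3), where m = n] mult_inverse_cancel[OF Wc(2,1,4), where m = n]
    mult_inverse_cancel[OF Uc(1,2,3), where m = n] mult_inverse_cancel[OF Uc(2,1,4), where m = n]
  show "inverse_pair n (Wi * U) (Ui * W)"
    unfolding inverse_pair_def using Wc Uc by (simp add: assoc cancel)
  have "Wi * X = Wi * (X * W) * Wi" using Wc X by (simp add: assoc cancel)
  also have "\<dots> = D * Wi" unfolding XW using Wc D by (simp add: assoc cancel)
  finally have WiX: "Wi * X = D * Wi" .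
  have "(Wi * U) * (Ui * X * U) = (Wi * X) * U" using Wc Uc X by (simp add: assoc cancel)
  then show "(Wi * U) * (Ui * X * U) = D * (Wi * U)" using Wc Uc D by (simp add: WiX assoc)
  have "(Wi * Y * W) * (Wi * U) = Wi * (Y * U)" using Wc Uc Y by (simp add: assoc cancel)
  then show "(Wi * U) * L = (Wi * Y * W) * (Wi * U)" using Wc Uc L by (simp add: YU assoc)
qed

(* The heart of the proof, in coordinates where A is the irreducible tridiagonal T and A* is
   diag(ds). M changes to an eigenbasis of T (M T M^-1 is diagonal) and B = M diag(ds) M^-1
   is A* in that eigenbasis. If ds 0 differs from every other ds k, then for every index set
   S separating i from j some entry of B leads from S to its complement. Otherwise the span R
   of the eigenvectors outside S is invariant under T and diag(ds). If some vector of R has a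
   nonzero 0-th coordinate, R contains e_0 and hence everything, contradicting i in S; if
   not, the eigenvector for j lies in R with vanishing 0-th coordinate, hence is zero. *)
lemma cut_crossed:
  fixes T M Mi B :: "'a::field mat"
  assumes T: "T \<in> carrier_mat n n" and tri: "tridiag_irred n T"
    and M_inv: "inverse_pair n M Mi"
    and M_T: "M * T = mat_diag n dg * M"
    and B: "B \<in> carrier_mat n n" and M_ds: "M * mat_diag n ds = B * M"
    and sep: "\<And>k. 0 < k \<Longrightarrow> k < n \<Longrightarrow> ds k \<noteq> ds 0"
    and i: "i < n" "i \<in> S" and j: "j < n" "j \<notin> S"
  shows "\<exists>a<n. \<exists>b<n. a \<in> S \<and> b \<notin> S \<and> B $$ (a, b) \<noteq> 0"
proof (rule ccontr)
  assume "\<not> ?thesis"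
  then have block: "\<And>a b. a < n \<Longrightarrow> b < n \<Longrightarrow> a \<in> S \<Longrightarrow> b \<notin> S \<Longrightarrow> B $$ (a, b) = 0" by auto
  have M: "M \<in> carrier_mat n n" and Mi: "Mi \<in> carrier_mat n n"
    and MMi: "M * Mi = 1\<^sub>m n" and MiM: "Mi * M = 1\<^sub>m n"
    using M_inv unfolding inverse_pair_def by auto
  define R where "R = coords_vanish n M S"
  have R: "lin_closed n R" unfolding R_def by (rule lin_closed_coords_vanish[OF M])
  have diag_block: "mat_diag n dg $$ (a, b) = 0" if "a < n" "b < n" "a \<in> S" "b \<notin> S" for a b
    using that by (auto simp: mat_diag_def)
  have T_inv: "T *\<^sub>v y \<in> R" if "y \<in> R" for y
    using coords_vanish_invariant[OF M T mat_diag_dim M_T diag_block that[unfolded R_def]]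
    unfolding R_def .
  have L_inv: "mat_diag n ds *\<^sub>v y \<in> R" if "y \<in> R" for y
    using coords_vanish_invariant[OF M mat_diag_dim B M_ds block that[unfolded R_def]] unfolding R_def .
  define x where "x k = Mi *\<^sub>v unit_vec n k" for k
  have x: "x k \<in> carrier_vec n" for k using Mi unfolding x_def by simp
  have Mx: "M *\<^sub>v x k = unit_vec n k" for k
    unfolding x_def using M Mi by (simp flip: assoc_mult_mat_vec add: MMi)
  have cancel: "Mi *\<^sub>v (M *\<^sub>v w) = w" if "w \<in> carrier_vec n" for w
    by (subst assoc_mult_mat_vec[symmetric, of Mi n n M n w]) (use that M Mi MiM in auto)
  have "0 < n" using i by simp
  consider (meets) y where "y \<in> R" "y $ 0 \<noteq> 0" | (avoids) "\<forall>y\<in>R. y $ 0 = 0" by auto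
  then show False
  proof cases
    case meets
    have "unit_vec n 0 \<in> R" by (rule diag_invariant_contains_unit_0[OF R L_inv sep meets \<open>0 < n\<close>])
    then have "x i \<in> R" using tridiag_cyclic[OF R T tri T_inv _ \<open>0 < n\<close>] x by auto
    then show False using Mx[of i] i unfolding R_def coords_vanish_def by auto
  next
    case avoids
    have xR: "x j \<in> R" using Mx[of j] x j unfolding R_def coords_vanish_def by auto
    have "M *\<^sub>v (T *\<^sub>v x j) = (mat_diag n dg * M) *\<^sub>v x j"
      using M T x by (simp flip: M_T)
    also have "\<dots> = mat_diag n dg *\<^sub>v (M *\<^sub>v x j)" by (rule assoc_mult_mat_vec[OF mat_diag_dim M x])
    also have "\<dots> = mat_diag n dg *\<^sub>v unit_vec n j" by (simp add: Mx)
    also have "\<dots> = dg j \<cdot>\<^sub>v unit_vec n j"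
      using mat_diag_mult_vec[of "unit_vec n j" n _ dg] j by (intro eq_vecI) (auto simp: mat_diag_def)
    also have "\<dots> = M *\<^sub>v (dg j \<cdot>\<^sub>v x j)" using M x by (simp add: mult_mat_vec Mx)
    finally have "M *\<^sub>v (T *\<^sub>v x j) = M *\<^sub>v (dg j \<cdot>\<^sub>v x j)" .
    then have "Mi *\<^sub>v (M *\<^sub>v (T *\<^sub>v x j)) = Mi *\<^sub>v (M *\<^sub>v (dg j \<cdot>\<^sub>v x j))" by simp
    then have "T *\<^sub>v x j = dg j \<cdot>\<^sub>v x j" using T x by (simp add: cancel)
    then have "x j = 0\<^sub>v n" using tridiag_eigenvector_zero[OF T tri x] avoids xR by blast
    moreover have "M *\<^sub>v 0\<^sub>v n = 0\<^sub>v n" using M by (intro eq_vecI) (auto simp: scalar_prod_def)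
    ultimately show False using Mx[of j] unit_vec_nonzero[OF j(1)] by metis
  qed
qed

lemma linear_factor_on_eigenvector:
  fixes A :: "'a::field mat"
  assumes A: "A \<in> carrier_mat n n" and v: "v \<in> carrier_vec n" and Av: "A *\<^sub>v v = lam \<cdot>\<^sub>v v"
  shows "(c \<cdot>\<^sub>m (A - t \<cdot>\<^sub>m 1\<^sub>m n)) *\<^sub>v v = (c * (lam - t)) \<cdot>\<^sub>v v"
proof -
  have "(A - t \<cdot>\<^sub>m 1\<^sub>m n) *\<^sub>v v = A *\<^sub>v v - (t \<cdot>\<^sub>m 1\<^sub>m n) *\<^sub>v v"
    using A v by (intro minus_mult_distrib_mat_vec) auto
  also have "\<dots> = lam \<cdot>\<^sub>v v - t \<cdot>\<^sub>v v"
    using Av v by (simp add: smult_mat_mult_vec[of _ n n])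
  finally have "(A - t \<cdot>\<^sub>m 1\<^sub>m n) *\<^sub>v v = lam \<cdot>\<^sub>v v - t \<cdot>\<^sub>v v" .
  moreover have "(c \<cdot>\<^sub>m (A - t \<cdot>\<^sub>m 1\<^sub>m n)) *\<^sub>v v = c \<cdot>\<^sub>v ((A - t \<cdot>\<^sub>m 1\<^sub>m n) *\<^sub>v v)"
    using A v by (intro smult_mat_mult_vec[of _ n n]) auto
  ultimately show ?thesis
    using v by (auto intro!: eq_vecI simp: algebra_simps)
qed

lemma polynomial_carrier:
  assumes "A \<in> carrier_mat n n"
  shows "foldr (\<lambda>j M. (c j \<cdot>\<^sub>m (A - t j \<cdot>\<^sub>m 1\<^sub>m n)) * M) js (1\<^sub>m n) \<in> carrier_mat n n"
  by (induction js) (use assms in auto)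

lemma polynomial_on_eigenvector:
  fixes A :: "'a::field mat"
  assumes A: "A \<in> carrier_mat n n" and v: "v \<in> carrier_vec n" and Av: "A *\<^sub>v v = lam \<cdot>\<^sub>v v"
  shows "foldr (\<lambda>j M. (c j \<cdot>\<^sub>m (A - t j \<cdot>\<^sub>m 1\<^sub>m n)) * M) js (1\<^sub>m n) *\<^sub>v v
      = prod_list (map (\<lambda>j. c j * (lam - t j)) js) \<cdot>\<^sub>v v"
proof (induction js)
  case Nil
  then show ?case using v by simp
next
  case (Cons j js)
  let ?M = "foldr (\<lambda>j M. (c j \<cdot>\<^sub>m (A - t j \<cdot>\<^sub>m 1\<^sub>m n)) * M) js (1\<^sub>m n)"
  let ?p = "prod_list (map (\<lambda>j. c j * (lam - t j)) js)"
  have F: "c j \<cdot>\<^sub>m (A - t j \<cdot>\<^sub>m 1\<^sub>m n) \<in> carrier_mat n n" using A by auto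
  have M: "?M \<in> carrier_mat n n" by (rule polynomial_carrier[OF A])
  have "(c j \<cdot>\<^sub>m (A - t j \<cdot>\<^sub>m 1\<^sub>m n) * ?M) *\<^sub>v v = (c j \<cdot>\<^sub>m (A - t j \<cdot>\<^sub>m 1\<^sub>m n)) *\<^sub>v (?p \<cdot>\<^sub>v v)"
    using F M v by (simp add: Cons.IH)
  also have "\<dots> = ?p \<cdot>\<^sub>v ((c j * (lam - t j)) \<cdot>\<^sub>v v)"
    using linear_factor_on_eigenvector[OF A v Av] F v by (simp add: mult_mat_vec)
  also have "\<dots> = (c j * (lam - t j) * ?p) \<cdot>\<^sub>v v"
    by (auto intro!: eq_vecI simp: ac_simps)
  finally show ?case by simp
qed

lemma prim_idem_carrier:
  "A \<in> carrier_mat (Suc d) (Suc d) \<Longrightarrow> prim_idem d A th a \<in> carrier_mat (Suc d) (Suc d)"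
  unfolding prim_idem_def by (rule polynomial_carrier)

lemma prim_idem_on_eigenvector:
  fixes A :: "'a::field mat"
  assumes A: "A \<in> carrier_mat (Suc d) (Suc d)" and v: "v \<in> carrier_vec (Suc d)"
    and Av: "A *\<^sub>v v = th k \<cdot>\<^sub>v v" and k: "k \<le> d" and a: "a \<le> d"
    and th_distinct: "\<And>i j. i \<le> d \<Longrightarrow> j \<le> d \<Longrightarrow> i \<noteq> j \<Longrightarrow> th i \<noteq> th j"
  shows "prim_idem d A th a *\<^sub>v v = (if a = k then v else 0\<^sub>v (Suc d))"
proof -
  let ?js = "filter (\<lambda>j. j \<noteq> a) [0..<Suc d]"
  let ?p = "prod_list (map (\<lambda>j. 1 / (th a - th j) * (th k - th j)) ?js)"
  have "?p = (if a = k then 1 else 0)"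
  proof (cases "a = k")
    case True
    then show ?thesis using th_distinct a by (auto intro!: prod_list_neutral)
  next
    case False
    have "k \<in> set ?js" using False k by auto
    then have "0 \<in> set (map (\<lambda>j. 1 / (th a - th j) * (th k - th j)) ?js)" by force
    then show ?thesis using False by (simp add: prod_list_zero_iff)
  qed
  then show ?thesis
    using polynomial_on_eigenvector[OF A v Av, of "\<lambda>j. 1 / (th a - th j)" th ?js] v
    unfolding prim_idem_def by auto
qed

lemma weighted_sum_carrier:
  assumes "\<And>i. i \<in> set l \<Longrightarrow> Es i \<in> carrier_mat n n"
  shows "foldr (\<lambda>i M. ths i \<cdot>\<^sub>m Es i + M) l (0\<^sub>m n n) \<in> carrier_mat n n"
  using assms by (induction l) auto

lemma weighted_sum_on_vector:
  fixes Es :: "nat \<Rightarrow> 'a::field mat"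
  assumes w: "w \<in> carrier_vec n" and dl: "distinct l"
    and Es: "\<And>i. i \<in> set l \<Longrightarrow> Es i \<in> carrier_mat n n"
    and Esw: "\<And>i. i \<in> set l \<Longrightarrow> Es i *\<^sub>v w = (if i = k then w else 0\<^sub>v n)"
  shows "foldr (\<lambda>i M. ths i \<cdot>\<^sub>m Es i + M) l (0\<^sub>m n n) *\<^sub>v w = (if k \<in> set l then ths k else 0) \<cdot>\<^sub>v w"
  using dl Es Esw
proof (induction l)
  case Nil
  then show ?case using w by (auto intro!: eq_vecI simp: scalar_prod_def)
next
  case (Cons i l)
  let ?M = "foldr (\<lambda>i M. ths i \<cdot>\<^sub>m Es i + M) l (0\<^sub>m n n)"
  have M: "?M \<in> carrier_mat n n" using Cons.prems(2) by (intro weighted_sum_carrier) auto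
  have Mw: "?M *\<^sub>v w = (if k \<in> set l then ths k else 0) \<cdot>\<^sub>v w" using Cons by auto
  have Ei: "Es i \<in> carrier_mat n n" using Cons.prems by auto
  have "(ths i \<cdot>\<^sub>m Es i + ?M) *\<^sub>v w = ths i \<cdot>\<^sub>v (Es i *\<^sub>v w) + ?M *\<^sub>v w"
    using Ei M w by (simp add: add_mult_distrib_mat_vec[of _ n n] smult_mat_mult_vec[OF Ei w])
  also have "\<dots> = (if k \<in> set (i # l) then ths k else 0) \<cdot>\<^sub>v w"
    using Cons.prems(1) Cons.prems(3)[of i] w unfolding Mw by (intro eq_vecI) auto
  finally show ?case by simp
qed

lemma dual_op_carrier:
  "(\<And>i. i \<le> d \<Longrightarrow> Es i \<in> carrier_mat (Suc d) (Suc d)) \<Longrightarrow> dual_op d Es ths \<in> carrier_mat (Suc d) (Suc d)"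
  unfolding dual_op_def by (rule weighted_sum_carrier) auto

lemma dual_op_on_vector:
  fixes Es :: "nat \<Rightarrow> 'a::field mat"
  assumes Es: "\<And>i. i \<le> d \<Longrightarrow> Es i \<in> carrier_mat (Suc d) (Suc d)" and w: "w \<in> carrier_vec (Suc d)"
    and Esw: "\<And>i. i \<le> d \<Longrightarrow> Es i *\<^sub>v w = (if i = k then w else 0\<^sub>v (Suc d))" and k: "k \<le> d"
  shows "dual_op d Es ths *\<^sub>v w = ths k \<cdot>\<^sub>v w"
proof -
  have "foldr (\<lambda>i M. ths i \<cdot>\<^sub>m Es i + M) [0..<Suc d] (0\<^sub>m (Suc d) (Suc d)) *\<^sub>v w
      = (if k \<in> set [0..<Suc d] then ths k else 0) \<cdot>\<^sub>v w"
    by (rule weighted_sum_on_vector[OF w]) (use Es Esw in \<open>auto simp del: upt_Suc\<close>)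
  then show ?thesis unfolding dual_op_def using k by (auto simp del: upt_Suc)
qed

lemma eigenbasis:
  fixes A :: "'a::field mat"
  assumes A: "A \<in> carrier_mat (Suc d) (Suc d)"
    and th_distinct: "\<And>i j. i \<le> d \<Longrightarrow> j \<le> d \<Longrightarrow> i \<noteq> j \<Longrightarrow> th i \<noteq> th j"
    and th_eig: "\<And>i. i \<le> d \<Longrightarrow> eigenvalue A (th i)"
  obtains W Wi where "inverse_pair (Suc d) W Wi" "A * W = W * mat_diag (Suc d) th"
    "\<And>a. a \<le> d \<Longrightarrow> basis_projector (Suc d) W a (prim_idem d A th a)"
proof -
  have "\<forall>k. \<exists>v. k \<le> d \<longrightarrow> v \<in> carrier_vec (Suc d) \<and> v \<noteq> 0\<^sub>v (Suc d) \<and> A *\<^sub>v v = th k \<cdot>\<^sub>v v"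
    using th_eig A unfolding eigenvalue_def eigenvector_def by auto
  then obtain v where v: "\<And>k. k \<le> d \<Longrightarrow> v k \<in> carrier_vec (Suc d)"
    "\<And>k. k \<le> d \<Longrightarrow> v k \<noteq> 0\<^sub>v (Suc d)" "\<And>k. k \<le> d \<Longrightarrow> A *\<^sub>v v k = th k \<cdot>\<^sub>v v k"
    by metis
  have E: "prim_idem d A th a *\<^sub>v v k = (if a = k then v k else 0\<^sub>v (Suc d))" if "a \<le> d" "k \<le> d" for a k
    using prim_idem_on_eigenvector[where th = th and k = k, OF A v(1)[OF that(2)] v(3)[OF that(2)]
      that(2) that(1) th_distinct] .
  obtain W Wi where W: "inverse_pair (Suc d) W Wi" and colW: "\<And>k. k \<le> d \<Longrightarrow> col W k = v k"
    and proj: "\<And>a. a \<le> d \<Longrightarrow> basis_projector (Suc d) W a (prim_idem d A th a)"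
    using projector_basis[of "Suc d" v "prim_idem d A th"] v E prim_idem_carrier[OF A]
    by (auto simp: less_Suc_eq_le)
  have "A * W = W * mat_diag (Suc d) th"
    using W unfolding inverse_pair_def
    by (intro eigen_columns[OF A]) (auto simp: less_Suc_eq_le colW v(3))
  then show ?thesis using that W proj by simp
qed

lemma idempotent_basis:
  fixes Es :: "nat \<Rightarrow> 'a::field mat"
  assumes Es: "\<And>i. i \<le> d \<Longrightarrow> Es i \<in> carrier_mat (Suc d) (Suc d)"
    and Es_orth: "\<And>i j. i \<le> d \<Longrightarrow> j \<le> d \<Longrightarrow>
         Es i * Es j = (if i = j then Es i else 0\<^sub>m (Suc d) (Suc d))"
    and Es_rank: "\<And>i. i \<le> d \<Longrightarrow> vec_space.rank (Suc d) (Es i) = 1"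
  obtains U Ui where "inverse_pair (Suc d) U Ui" "dual_op d Es ths * U = U * mat_diag (Suc d) ths"
    "\<And>a. a \<le> d \<Longrightarrow> basis_projector (Suc d) U a (Es a)"
proof -
  have "\<exists>u. u \<in> carrier_vec (Suc d) \<and> u \<noteq> 0\<^sub>v (Suc d) \<and> Es k *\<^sub>v u = u" if k: "k \<le> d" for k
  proof -
    have "Es k \<noteq> 0\<^sub>m (Suc d) (Suc d)"
      using Es_rank[OF k] vec_space.rank_0I[of "Suc d"] by (metis zero_neq_one)
    then show ?thesis using idempotent_fixed_vector[OF Es[OF k]] Es_orth[OF k k] by auto
  qed
  then obtain u where u: "\<And>k. k \<le> d \<Longrightarrow> u k \<in> carrier_vec (Suc d)"
    "\<And>k. k \<le> d \<Longrightarrow> u k \<noteq> 0\<^sub>v (Suc d)" "\<And>k. k \<le> d \<Longrightarrow> Es k *\<^sub>v u k = u k"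
    by metis
  have Eu: "Es a *\<^sub>v u k = (if a = k then u k else 0\<^sub>v (Suc d))" if a: "a \<le> d" and k: "k \<le> d" for a k
  proof -
    have "Es a *\<^sub>v u k = (Es a * Es k) *\<^sub>v u k" using Es[OF a] Es[OF k] u(1,3)[OF k] by simp
    then show ?thesis
      using Es_orth[OF a k] u(1,3)[OF k] by (auto intro!: eq_vecI simp: scalar_prod_def)
  qed
  obtain U Ui where U: "inverse_pair (Suc d) U Ui" and colU: "\<And>k. k \<le> d \<Longrightarrow> col U k = u k"
    and proj: "\<And>a. a \<le> d \<Longrightarrow> basis_projector (Suc d) U a (Es a)"
    using projector_basis[of "Suc d" u Es] u Es Eu by (auto simp: less_Suc_eq_le)
  have "dual_op d Es ths * U = U * mat_diag (Suc d) ths"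
    using U unfolding inverse_pair_def
    by (intro eigen_columns[OF dual_op_carrier[OF Es]])
      (auto simp: less_Suc_eq_le colU dual_op_on_vector[OF Es u(1) Eu])
  then show ?thesis using that U proj by simp
qed

(* In the basis U adapted to the E*_i, A is irreducible tridiagonal: its (l, j) entry
   vanishes exactly when E*_l A E*_j does. *)
lemma tridiagonal_in_idempotent_basis:
  fixes A :: "'a::field mat" and Es :: "nat \<Rightarrow> 'a mat"
  assumes A: "A \<in> carrier_mat (Suc d) (Suc d)" and U: "inverse_pair (Suc d) U Ui"
    and proj: "\<And>a. a \<le> d \<Longrightarrow> basis_projector (Suc d) U a (Es a)"
    and tridiag0: "\<And>i j. i \<le> d \<Longrightarrow> j \<le> d \<Longrightarrow> i + 1 < j \<or> j + 1 < i \<Longrightarrow>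
         Es i * A * Es j = 0\<^sub>m (Suc d) (Suc d)"
    and tridiag1: "\<And>i j. i \<le> d \<Longrightarrow> j \<le> d \<Longrightarrow> i + 1 = j \<or> j + 1 = i \<Longrightarrow>
         Es i * A * Es j \<noteq> 0\<^sub>m (Suc d) (Suc d)"
  shows "tridiag_irred (Suc d) (Ui * A * U)"
proof -
  have "Es l * A * Es j = 0\<^sub>m (Suc d) (Suc d) \<longleftrightarrow> (Ui * A * U) $$ (l, j) = 0" if "l \<le> d" "j \<le> d" for l j
    using that by (intro sandwich_zero_iff[OF U proj _ proj _ A]) auto
  then show ?thesis
    using tridiag0 tridiag1 unfolding tridiag_irred_def by (auto simp: less_Suc_eq_le)
qed

(* i reaches j in r* if every set containing i but not j is left by some r-edge: otherwise
   the set of vertices reachable from i would be such a set. *)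
lemma rtrancl_if_cuts_crossed:
  assumes "\<And>S. i \<in> S \<Longrightarrow> j \<notin> S \<Longrightarrow> \<exists>a\<in>S. \<exists>b. b \<notin> S \<and> (a, b) \<in> r"
  shows "(i, j) \<in> r\<^sup>*"
proof (rule ccontr)
  assume "(i, j) \<notin> r\<^sup>*"
  then obtain a b where "(i, a) \<in> r\<^sup>*" "(i, b) \<notin> r\<^sup>*" "(a, b) \<in> r"
    using assms[of "{k. (i, k) \<in> r\<^sup>*}"] by auto
  then show False by (meson rtrancl_into_rtrancl)
qed

theorem proposition4p9:
  fixes d :: nat and A :: "'a::field mat" and Es :: "nat \<Rightarrow> 'a mat"
    and th ths :: "nat \<Rightarrow> 'a"
  assumes d: "d \<ge> 1"
    and A_carrier: "A \<in> carrier_mat (Suc d) (Suc d)"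
    and Es_carrier: "\<And>i. i \<le> d \<Longrightarrow> Es i \<in> carrier_mat (Suc d) (Suc d)"
    and Es_orth: "\<And>i j. i \<le> d \<Longrightarrow> j \<le> d \<Longrightarrow>
         Es i * Es j = (if i = j then Es i else 0\<^sub>m (Suc d) (Suc d))"
    and Es_rank: "\<And>i. i \<le> d \<Longrightarrow> vec_space.rank (Suc d) (Es i) = 1"
    and tridiag0: "\<And>i j. i \<le> d \<Longrightarrow> j \<le> d \<Longrightarrow> i + 1 < j \<or> j + 1 < i \<Longrightarrow>
         Es i * A * Es j = 0\<^sub>m (Suc d) (Suc d)"
    and tridiag1: "\<And>i j. i \<le> d \<Longrightarrow> j \<le> d \<Longrightarrow> i + 1 = j \<or> j + 1 = i \<Longrightarrow>
         Es i * A * Es j \<noteq> 0\<^sub>m (Suc d) (Suc d)"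
    and th_distinct: "\<And>i j. i \<le> d \<Longrightarrow> j \<le> d \<Longrightarrow> i \<noteq> j \<Longrightarrow> th i \<noteq> th j"
    and th_eig: "\<And>i. i \<le> d \<Longrightarrow> eigenvalue A (th i)"
    and ths0: "\<And>i. 1 \<le> i \<Longrightarrow> i \<le> d \<Longrightarrow> ths i \<noteq> ths 0"
  shows "Delta_connected d A th Es ths"
proof -
  obtain W Wi where W: "inverse_pair (Suc d) W Wi" and AW: "A * W = W * mat_diag (Suc d) th"
    and E: "\<And>a. a \<le> d \<Longrightarrow> basis_projector (Suc d) W a (prim_idem d A th a)"
    using eigenbasis[where th = th, OF A_carrier th_distinct th_eig] by blast
  obtain U Ui where U: "inverse_pair (Suc d) U Ui" and AsU: "dual_op d Es ths * U = U * mat_diag (Suc d) ths"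
    and Es: "\<And>a. a \<le> d \<Longrightarrow> basis_projector (Suc d) U a (Es a)"
    using idempotent_basis[OF Es_carrier Es_orth Es_rank] by blast
  let ?As = "dual_op d Es ths"
  note As = dual_op_carrier[OF Es_carrier]
  note M = change_of_basis[OF W U A_carrier mat_diag_dim AW As mat_diag_dim AsU]
  have tri: "tridiag_irred (Suc d) (Ui * A * U)"
    by (rule tridiagonal_in_idempotent_basis[OF A_carrier U Es tridiag0 tridiag1])
  have "\<exists>a\<in>S. \<exists>b. b \<notin> S \<and> Delta_adj d A th Es ths a b" if "i \<le> d" "j \<le> d" "i \<in> S" "j \<notin> S" for S i j
  proof -
    have "\<exists>a<Suc d. \<exists>b<Suc d. a \<in> S \<and> b \<notin> S \<and> (Wi * ?As * W) $$ (a, b) \<noteq> 0"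
      by (rule cut_crossed[OF _ tri M(1,2) _ M(3)])
        (use that ths0 U W As A_carrier in \<open>auto simp: inverse_pair_def\<close>)
    then obtain a b where ab: "a < Suc d" "b < Suc d" "a \<in> S" "b \<notin> S"
      "(Wi * ?As * W) $$ (a, b) \<noteq> 0" by blast
    then have "prim_idem d A th a * ?As * prim_idem d A th b \<noteq> 0\<^sub>m (Suc d) (Suc d)"
      using sandwich_zero_iff[OF W E _ E _ As] by simp
    then have "Delta_adj d A th Es ths a b" using ab unfolding Delta_adj_def by fastforce
    then show ?thesis using ab by blast
  qed
  then show ?thesis unfolding Delta_connected_def by (auto intro!: rtrancl_if_cuts_crossed)
qed

end
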